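(* Let $A\in S^n_+$, $b\in\mathbb{R}^n$, $c\in\mathbb{R}$, $r>0$. If $A$ is not nonexpansive, then $f(x)=\frac r2\langle x,Ax\rangle+\langle b,x\rangle+c$ is not the Moreau envelope $e_rg$ of any proper, lower semicontinuous, convex function $g$.
   Context: $S^n_+$ is the set of symmetric positive semidefinite $n\times n$ matrices; $A$ is nonexpansive if $\|Ax-Ay\|\le\|x-y\|$ for all $x,y$. $e_rg(x)=\inf_y\{g(y)+\frac r2\|y-x\|^2\}$. *)

theory Defs
  imports "HOL-Analysis.Analysis" "HOL-Library.Extended_Real"
begin

definition psd_sym :: "real^'n^'n \<Rightarrow> bool" where
  "psd_sym A \<longleftrightarrow> transpose A = A \<and> (\<forall>x. 0 \<le> x \<bullet> (A *v x))"

definition nonexpansive :: "('a::real_normed_vector \<Rightarrow> 'b::real_normed_vector) \<Rightarrow> bool" where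
  "nonexpansive T \<longleftrightarrow> (\<forall>x y. norm (T x - T y) \<le> norm (x - y))"

definition proper_fun :: "('a \<Rightarrow> ereal) \<Rightarrow> bool" where
  "proper_fun g \<longleftrightarrow> (\<forall>x. g x \<noteq> -\<infinity>) \<and> (\<exists>x. g x \<noteq> \<infinity>)"

definition convex_ext :: "('a::real_vector \<Rightarrow> ereal) \<Rightarrow> bool" where
  "convex_ext g \<longleftrightarrow> convex {(x, t::real). g x \<le> ereal t}"

definition lsc_ext :: "('a::topological_space \<Rightarrow> ereal) \<Rightarrow> bool" where
  "lsc_ext g \<longleftrightarrow> (\<forall>t::ereal. closed {x. g x \<le> t})"

definition moreau_env :: "real \<Rightarrow> ('a::real_normed_vector \<Rightarrow> ereal) \<Rightarrow> 'a \<Rightarrow> ereal" where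
  "moreau_env r g x = (INF y. g y + ereal (r / 2 * (norm (y - x))\<^sup>2))"

end

theory Submission
  imports Defs
begin

text \<open>Whatever g is, each term g(y) + r/2 |y - x|^2 of the infimum defining e = e_r g is
  semiconcave in x: by the parallelogram law its values at x + d and x - d sum to twice its
  value at x plus r |d|^2. Passing to the infimum gives e(x + d) + e(x - d) \<le> 2 e(x) + r |d|^2.
  For the quadratic f the second difference f(d) + f(-d) - 2 f(0) is exactly r \<langle>d, A d\<rangle>,
  so A \<le> I; together with A \<ge> 0 this yields |A x| \<le> |x|.\<close>

lemma parallelogram_law:
  fixes x d :: "'a::real_inner"
  shows "(norm (x + d))\<^sup>2 + (norm (x - d))\<^sup>2 = 2 * (norm x)\<^sup>2 + 2 * (norm d)\<^sup>2"
  by (simp add: power2_norm_eq_inner inner_add_left inner_add_right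
      inner_diff_left inner_diff_right inner_commute)

lemma moreau_env_le: "moreau_env r g x \<le> g y + ereal (r / 2 * (norm (y - x))\<^sup>2)"
  unfolding moreau_env_def by (rule INF_lower) simp

lemma moreau_env_semiconcave:
  fixes g :: "'a::real_inner \<Rightarrow> ereal" and F :: "'a \<Rightarrow> real"
  assumes env: "moreau_env r g = (\<lambda>x. ereal (F x))"
  shows "F (x + d) + F (x - d) \<le> 2 * F x + r * (norm d)\<^sup>2"
proof -
  have F_le: "ereal (F z) \<le> g y + ereal (r / 2 * (norm (y - z))\<^sup>2)" for y z
    using moreau_env_le[of r g z y] env by simp
  let ?m = "(F (x + d) + F (x - d) - r * (norm d)\<^sup>2) / 2"
  have "ereal ?m \<le> g y + ereal (r / 2 * (norm (y - x))\<^sup>2)" for y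
  proof (cases "g y")
    case (real v)
    have "(norm (y - (x + d)))\<^sup>2 + (norm (y - (x - d)))\<^sup>2
        = 2 * (norm (y - x))\<^sup>2 + 2 * (norm d)\<^sup>2"
      using parallelogram_law[of "y - x" d] by (simp add: algebra_simps)
    moreover have "F (x + d) \<le> v + r / 2 * (norm (y - (x + d)))\<^sup>2"
      and "F (x - d) \<le> v + r / 2 * (norm (y - (x - d)))\<^sup>2"
      using F_le[of "x + d" y] F_le[of "x - d" y] real by simp_all
    ultimately have "?m \<le> v + r / 2 * (norm (y - x))\<^sup>2"
      by (simp add: field_simps) (smt (verit) distrib_left)
    then show ?thesis using real by simp
  next
    case MInf
    then show ?thesis using F_le[of "x + d" y] by simp
  qed simp
  then have "ereal ?m \<le> moreau_env r g x"
    unfolding moreau_env_def by (rule INF_greatest)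
  then show ?thesis using env by simp
qed

lemma quadratic_second_difference:
  fixes A :: "real^'n^'n"
  shows "(r / 2 * (d \<bullet> (A *v d)) + b \<bullet> d + c) + (r / 2 * ((-d) \<bullet> (A *v (-d))) + b \<bullet> (-d) + c)
       - 2 * (r / 2 * (0 \<bullet> (A *v 0)) + b \<bullet> 0 + c) = r * (d \<bullet> (A *v d))"
  using matrix_vector_mult_diff_distrib[of A 0 d] by (simp add: algebra_simps)

lemma psd_sym_le_id_norm_le:
  fixes A :: "real^'n^'n"
  assumes "psd_sym A" and le_id: "\<And>d. d \<bullet> (A *v d) \<le> (norm d)\<^sup>2"
  shows "norm (A *v x) \<le> norm x"
proof -
  have sym: "u \<bullet> (A *v v) = (A *v u) \<bullet> v" for u v
    using assms(1) unfolding psd_sym_def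
    by (metis dot_lmul_matrix inner_commute vector_transpose_matrix)
  define v where "v = A *v x"
  have x_Av: "x \<bullet> (A *v v) = (norm v)\<^sup>2"
    by (simp add: v_def sym power2_norm_eq_inner)
  have "0 \<le> (x - v) \<bullet> (A *v (x - v))"
    using assms(1) unfolding psd_sym_def by blast
  also have "\<dots> = x \<bullet> (A *v x) - 2 * (x \<bullet> (A *v v)) + v \<bullet> (A *v v)"
    by (simp add: matrix_vector_mult_diff_distrib inner_diff_left inner_diff_right
        sym[of v x] inner_commute)
  also have "\<dots> \<le> (norm x)\<^sup>2 - (norm v)\<^sup>2"
    using le_id[of x] le_id[of v] x_Av by linarith
  finally show ?thesis
    unfolding v_def by (simp add: power2_le_iff_abs_le)
qed

lemma nonexpansive_linear_iff:
  assumes "linear T"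
  shows "nonexpansive T \<longleftrightarrow> (\<forall>x. norm (T x) \<le> norm x)"
  unfolding nonexpansive_def
  by (metis assms linear_diff linear_0 diff_zero)

theorem proposition4p44:
  fixes A :: "real^'n^'n" and b :: "real^'n" and c r :: real
  assumes "psd_sym A" and "r > 0"
    and "\<not> nonexpansive (\<lambda>x. A *v x)"
  shows "\<not> (\<exists>g :: real^'n \<Rightarrow> ereal. proper_fun g \<and> lsc_ext g \<and> convex_ext g \<and>
            moreau_env r g = (\<lambda>x. ereal (r / 2 * (x \<bullet> (A *v x)) + b \<bullet> x + c)))"
proof
  assume "\<exists>g :: real^'n \<Rightarrow> ereal. proper_fun g \<and> lsc_ext g \<and> convex_ext g \<and>
            moreau_env r g = (\<lambda>x. ereal (r / 2 * (x \<bullet> (A *v x)) + b \<bullet> x + c))"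
  then obtain g :: "real^'n \<Rightarrow> ereal" where
    env: "moreau_env r g = (\<lambda>x. ereal (r / 2 * (x \<bullet> (A *v x)) + b \<bullet> x + c))" by blast
  have "d \<bullet> (A *v d) \<le> (norm d)\<^sup>2" for d
  proof -
    have "r * (d \<bullet> (A *v d)) \<le> r * (norm d)\<^sup>2"
      using moreau_env_semiconcave[OF env, of 0 d] quadratic_second_difference[of r d A b c]
      by simp
    then show ?thesis using \<open>r > 0\<close> by simp
  qed
  then have "nonexpansive (\<lambda>x. A *v x)"
    using psd_sym_le_id_norm_le[OF \<open>psd_sym A\<close>] nonexpansive_linear_iff[OF matrix_vector_mul_linear]
    by blast
  with assms(3) show False ..
qed

end
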